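(* Let $\alpha\ge1$ and $0<\theta,b\le1$. Let $\nu,\mu$ be the Gibbs distributions of two Ising models $(G,J^\nu,h^\nu)$ and $(G,J^\mu,h^\mu)$ on $G=(V,E)$. If $d_{\mathrm{par}}(\nu,\mu)\ge\theta$ and both $\nu$ and $\mu$ are $b$-marginally bounded, then $$D_{\chi^\alpha}(\nu\|\mu)\ \ge\ B_{\alpha,b}(\theta)\sum_{\sigma\in\{-1,+1\}^V}\mu(\sigma)\left(\frac{\nu(\sigma)}{\mu(\sigma)}+1\right)^\alpha,$$ where, writing $s=\left(\frac{b^{2\alpha}\theta^\alpha}{2}\right)^{1/(\alpha+1)}$, $$B_{\alpha,b}(\theta)=\frac{b^{2\alpha}\theta^\alpha}{2}\,(s+2)^{-\alpha}\,(2s+1)^{-1}.$$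
   Context: An Ising model $(G,J,h)$ on $G=(V,E)$ consists of a symmetric $J\in\mathbb{R}^{V\times V}$ with $J_{uv}\ne0$ only if $\{u,v\}\in E$, and $h\in\mathbb{R}^V$; its Gibbs distribution on $\{-1,+1\}^V$ is $\mu(\sigma)\propto\exp(\tfrac12\sigma^TJ\sigma+h^T\sigma)$. The $\chi^\alpha$-divergence is $D_{\chi^\alpha}(\nu\|\mu)=\sum_\sigma\mu(\sigma)\cdot\frac12\left|\frac{\nu(\sigma)}{\mu(\sigma)}-1\right|^\alpha$. The parameter distance is $d_{\mathrm{par}}(\nu,\mu)=\max\left\{\max_{u,v}|J^\nu_{uv}-J^\mu_{uv}|,\ \max_{v\in V}\frac{|h^\nu(v)-h^\mu(v)|}{\deg(v)+1}\right\}$. $\mu$ is $b$-marginally bounded if for every $\Lambda\subseteq V$, pinning $\sigma\in\{-1,+1\}^\Lambda$, $v\notin\Lambda$, $c\in\{-1,+1\}$, the conditional marginal probability that $v$ takes value $c$ given $\sigma$ on $\Lambda$ is at least $b$. *)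

theory Defs
  imports Complex_Main
begin

text \<open>The graph G = (V,E): the vertex set V is the (finite) universe of the type 'v,
  E is a symmetric irreflexive edge relation.\<close>
definition simple_graph :: "('v \<Rightarrow> 'v \<Rightarrow> bool) \<Rightarrow> bool" where
  "simple_graph E \<longleftrightarrow> (\<forall>u v. E u v = E v u) \<and> (\<forall>v. \<not> E v v)"

definition deg :: "('v \<Rightarrow> 'v \<Rightarrow> bool) \<Rightarrow> 'v \<Rightarrow> nat" where
  "deg E v = card {u. E u v}"

definition configs :: "('v \<Rightarrow> real) set" where
  "configs = {\<sigma>. \<forall>v. \<sigma> v = 1 \<or> \<sigma> v = -1}"

definition ising_model :: "('v \<Rightarrow> 'v \<Rightarrow> bool) \<Rightarrow> ('v \<Rightarrow> 'v \<Rightarrow> real) \<Rightarrow> ('v \<Rightarrow> real) \<Rightarrow> bool" where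
  "ising_model E J h \<longleftrightarrow> simple_graph E \<and> (\<forall>u v. J u v = J v u) \<and> (\<forall>u v. J u v \<noteq> 0 \<longrightarrow> E u v)"

definition gibbs_weight :: "('v::finite \<Rightarrow> 'v \<Rightarrow> real) \<Rightarrow> ('v \<Rightarrow> real) \<Rightarrow> ('v \<Rightarrow> real) \<Rightarrow> real" where
  "gibbs_weight J h \<sigma> = exp ((1/2) * (\<Sum>u\<in>UNIV. \<Sum>v\<in>UNIV. \<sigma> u * J u v * \<sigma> v) + (\<Sum>v\<in>UNIV. h v * \<sigma> v))"

definition gibbs :: "('v::finite \<Rightarrow> 'v \<Rightarrow> real) \<Rightarrow> ('v \<Rightarrow> real) \<Rightarrow> ('v \<Rightarrow> real) \<Rightarrow> real" where
  "gibbs J h \<sigma> = gibbs_weight J h \<sigma> / (\<Sum>\<tau>\<in>configs. gibbs_weight J h \<tau>)"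

text \<open>b-marginal boundedness of a distribution p on configs. A pinning on \<Lambda> is
  given as the restriction to \<Lambda> of a configuration \<tau>.\<close>
definition marginally_bounded :: "real \<Rightarrow> (('v::finite \<Rightarrow> real) \<Rightarrow> real) \<Rightarrow> bool" where
  "marginally_bounded b p \<longleftrightarrow>
     (\<forall>\<Lambda> \<tau> v c. \<tau> \<in> configs \<longrightarrow> v \<notin> \<Lambda> \<longrightarrow> (c = 1 \<or> c = -1) \<longrightarrow>
        (\<Sum>\<sigma>\<in>{\<sigma>\<in>configs. (\<forall>u\<in>\<Lambda>. \<sigma> u = \<tau> u) \<and> \<sigma> v = c}. p \<sigma>)
          / (\<Sum>\<sigma>\<in>{\<sigma>\<in>configs. \<forall>u\<in>\<Lambda>. \<sigma> u = \<tau> u}. p \<sigma>) \<ge> b)"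

definition chi_div :: "real \<Rightarrow> (('v::finite \<Rightarrow> real) \<Rightarrow> real) \<Rightarrow> (('v \<Rightarrow> real) \<Rightarrow> real) \<Rightarrow> real" where
  "chi_div \<alpha> \<nu> \<mu> = (\<Sum>\<sigma>\<in>configs. \<mu> \<sigma> * ((1/2) * \<bar>\<nu> \<sigma> / \<mu> \<sigma> - 1\<bar> powr \<alpha>))"

definition d_par :: "('v::finite \<Rightarrow> 'v \<Rightarrow> bool) \<Rightarrow> ('v \<Rightarrow> 'v \<Rightarrow> real) \<Rightarrow> ('v \<Rightarrow> real)
    \<Rightarrow> ('v \<Rightarrow> 'v \<Rightarrow> real) \<Rightarrow> ('v \<Rightarrow> real) \<Rightarrow> real" where
  "d_par E J1 h1 J2 h2 = max (Max {\<bar>J1 u v - J2 u v\<bar> | u v. True})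
                             (Max {\<bar>h1 v - h2 v\<bar> / (real (deg E v) + 1) | v. True})"

definition B_const :: "real \<Rightarrow> real \<Rightarrow> real \<Rightarrow> real" where
  "B_const \<alpha> b \<theta> =
    (let s = (b powr (2*\<alpha>) * \<theta> powr \<alpha> / 2) powr (1 / (\<alpha> + 1))
     in (b powr (2*\<alpha>) * \<theta> powr \<alpha> / 2) * (s + 2) powr (-\<alpha>) * (2*s + 1) powr (-1))"

end

theory Submission
  imports Defs "HOL-Analysis.Convex"
begin

(* The argument goes through the total variation distance. Flipping the spin at v multiplies the
   odds of \<nu> against \<mu> by exp (2 \<sigma>(v) \<Delta>_v(\<sigma>)), where \<Delta>_v is the difference of the local fields
   of the two models at v. As both conditional flip probabilities lie in [b, 1 - b], the pair
   {\<sigma>, flip v \<sigma>} contributes at least 2 b (1 - b) |\<Delta>_v| times its \<mu>-mass to the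
   l1-distance. If d_par \<ge> \<theta> is witnessed by a field, |\<Delta>_v| \<ge> \<theta> everywhere; if it is witnessed
   by a coupling J_vu, flipping u shifts \<Delta>_v by 2 |J_vu|, so |\<Delta>_v| has \<mu>-mean at least 2 b \<theta>.
   Hence the l1-distance is at least b^2 \<theta>, and Jensen gives 2 chi_div \<alpha> \<nu> \<mu> \<ge> (b^2 \<theta>)^\<alpha>. Finally
   (r + 1)^\<alpha> \<le> ((s + 2) / s)^\<alpha> |r - 1|^\<alpha> + (s + 2)^\<alpha> pointwise, and s^(\<alpha>+1) = b^(2\<alpha>) \<theta>^\<alpha> / 2
   balances the two resulting terms. *)

definition flip :: "'v \<Rightarrow> ('v \<Rightarrow> real) \<Rightarrow> ('v \<Rightarrow> real)" where
  "flip v \<sigma> = \<sigma>(v := - \<sigma> v)"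

lemma configs_PiE: "configs = PiE UNIV (\<lambda>_. {1, -1::real})"
  by (auto simp: configs_def PiE_def extensional_def Pi_def)

lemma finite_configs: "finite (configs :: ('v::finite \<Rightarrow> real) set)"
  unfolding configs_PiE by (rule finite_PiE) auto

lemma const_one_in_configs: "(\<lambda>_. 1) \<in> configs"
  by (simp add: configs_def)

lemma configs_abs_eq_1: "\<sigma> \<in> configs \<Longrightarrow> \<bar>\<sigma> v\<bar> = 1"
  by (auto simp: configs_def dest: spec[of _ v])

lemma flip_in_configs: "\<sigma> \<in> configs \<Longrightarrow> flip v \<sigma> \<in> configs"
  by (auto simp: configs_def flip_def)

lemma flip_flip [simp]: "flip v (flip v \<sigma>) = \<sigma>"
  by (auto simp: flip_def)

lemma sum_configs_flip: "(\<Sum>\<sigma>\<in>configs. f (flip v \<sigma>)) = (\<Sum>\<sigma>\<in>configs. f \<sigma>)"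
  by (rule sum.reindex_bij_witness[of _ "flip v" "flip v"]) (auto simp: flip_in_configs)

section \<open>Gibbs distributions under a single flip\<close>

lemma gibbs_partition_pos: "0 < (\<Sum>\<tau>\<in>(configs :: ('v::finite \<Rightarrow> real) set). gibbs_weight J h \<tau>)"
  using finite_configs const_one_in_configs by (intro sum_pos) (auto simp: gibbs_weight_def)

lemma gibbs_pos: "0 < gibbs J h (\<sigma> :: 'v::finite \<Rightarrow> real)"
  using gibbs_partition_pos[of J h] by (simp add: gibbs_def gibbs_weight_def)

lemma sum_gibbs: "(\<Sum>\<sigma>\<in>(configs :: ('v::finite \<Rightarrow> real) set). gibbs J h \<sigma>) = 1"
  using gibbs_partition_pos[of J h] by (simp add: gibbs_def flip: sum_divide_distrib)

definition local_field :: "('v::finite \<Rightarrow> 'v \<Rightarrow> real) \<Rightarrow> ('v \<Rightarrow> real) \<Rightarrow> 'v \<Rightarrow> ('v \<Rightarrow> real) \<Rightarrow> real" where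
  "local_field J h v \<sigma> = h v + (\<Sum>w\<in>UNIV. J v w * \<sigma> w)"

lemma local_field_flip: "local_field J h v (flip u \<sigma>) = local_field J h v \<sigma> - 2 * J v u * \<sigma> u"
proof -
  have "(\<Sum>w\<in>UNIV. J v w * flip u \<sigma> w) = (\<Sum>w\<in>UNIV. J v w * \<sigma> w - (if w = u then 2 * J v u * \<sigma> u else 0))"
    by (rule sum.cong) (auto simp: flip_def algebra_simps)
  then show ?thesis
    by (simp add: local_field_def sum_subtractf)
qed

lemma local_field_diff:
  "local_field J1 h1 v \<sigma> - local_field J2 h2 v \<sigma> = local_field (J1 - J2) (h1 - h2) v \<sigma>"
  by (simp add: local_field_def algebra_simps sum_subtractf)

lemma gibbs_weight_flip:
  fixes J :: "'v::finite \<Rightarrow> 'v \<Rightarrow> real"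
  assumes sym: "\<And>u w. J u w = J w u" and diag: "J v v = 0"
  shows "gibbs_weight J h \<sigma> = exp (2 * \<sigma> v * local_field J h v \<sigma>) * gibbs_weight J h (flip v \<sigma>)"
proof -
  define d where "d u = (if u = v then 2 * \<sigma> v else 0)" for u
  have flip_eq: "flip v \<sigma> = (\<lambda>u. \<sigma> u - d u)"
    by (auto simp: flip_def d_def)
  have d_left: "d u * X = (if u = v then 2 * \<sigma> v * X else 0)"
    and d_right: "X * d u = (if u = v then 2 * \<sigma> v * X else 0)" for u X
    by (simp_all add: d_def)
  have "(\<Sum>u\<in>UNIV. \<Sum>w\<in>UNIV. d u * J u w * \<sigma> w) = (\<Sum>u\<in>UNIV. d u * (\<Sum>w\<in>UNIV. J u w * \<sigma> w))"
    by (simp add: sum_distrib_left mult.assoc)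
  then have "(\<Sum>u\<in>UNIV. \<Sum>w\<in>UNIV. d u * J u w * \<sigma> w) = 2 * \<sigma> v * (\<Sum>w\<in>UNIV. J v w * \<sigma> w)"
    by (simp add: d_left)
  moreover have "(\<Sum>u\<in>UNIV. \<Sum>w\<in>UNIV. \<sigma> u * J u w * d w) = (\<Sum>u\<in>UNIV. 2 * \<sigma> v * (J v u * \<sigma> u))"
    unfolding d_right by (simp add: sym[of _ v] mult_ac)
  then have "(\<Sum>u\<in>UNIV. \<Sum>w\<in>UNIV. \<sigma> u * J u w * d w) = 2 * \<sigma> v * (\<Sum>w\<in>UNIV. J v w * \<sigma> w)"
    by (simp add: sum_distrib_left)
  moreover have "(\<Sum>u\<in>UNIV. \<Sum>w\<in>UNIV. d u * J u w * d w) = 0"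
    unfolding d_right by (auto simp: d_def diag intro: sum.neutral)
  moreover have "(\<Sum>w\<in>UNIV. h w * d w) = 2 * \<sigma> v * h v"
    by (simp add: d_right)
  ultimately have "(1/2) * (\<Sum>u\<in>UNIV. \<Sum>w\<in>UNIV. \<sigma> u * J u w * \<sigma> w) + (\<Sum>w\<in>UNIV. h w * \<sigma> w)
      = 2 * \<sigma> v * local_field J h v \<sigma> + ((1/2) * (\<Sum>u\<in>UNIV. \<Sum>w\<in>UNIV. (\<sigma> u - d u) * J u w * (\<sigma> w - d w))
        + (\<Sum>w\<in>UNIV. h w * (\<sigma> w - d w)))"
    by (simp add: local_field_def algebra_simps sum.distrib sum_subtractf)
  then show ?thesis
    by (simp add: gibbs_weight_def flip_eq flip: exp_add)
qed

lemma gibbs_flip: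
  assumes "\<And>u w. J u w = J w u" and "J v v = 0"
  shows "gibbs J h \<sigma> = exp (2 * \<sigma> v * local_field J h v \<sigma>) * gibbs J h (flip v \<sigma>)"
  unfolding gibbs_def by (subst gibbs_weight_flip[where J = J and v = v, OF assms]) simp

lemma ising_model_sym: "ising_model E J h \<Longrightarrow> J u w = J w u"
  unfolding ising_model_def by blast

lemma ising_model_diag: "ising_model E J h \<Longrightarrow> J v v = 0"
  unfolding ising_model_def simple_graph_def by blast

lemma gibbs_cross_ratio_flip:
  assumes "ising_model E J1 h1" and "ising_model E J2 h2"
  shows "gibbs J1 h1 \<sigma> * gibbs J2 h2 (flip v \<sigma>) =
    exp (2 * \<sigma> v * local_field (J1 - J2) (h1 - h2) v \<sigma>) * gibbs J1 h1 (flip v \<sigma>) * gibbs J2 h2 \<sigma>"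
proof -
  let ?x1 = "2 * \<sigma> v * local_field J1 h1 v \<sigma>" and ?x2 = "2 * \<sigma> v * local_field J2 h2 v \<sigma>"
  have "gibbs J1 h1 \<sigma> = exp ?x1 * gibbs J1 h1 (flip v \<sigma>)"
    and "gibbs J2 h2 \<sigma> = exp ?x2 * gibbs J2 h2 (flip v \<sigma>)"
    using assms by (auto intro: gibbs_flip ising_model_sym ising_model_diag)
  moreover have "exp ?x1 = exp (2 * \<sigma> v * local_field (J1 - J2) (h1 - h2) v \<sigma>) * exp ?x2"
    by (simp add: local_field_diff[symmetric] algebra_simps flip: exp_add)
  ultimately show ?thesis
    by (simp add: mult_ac)
qed

lemma configs_agree_off_vertex:
  assumes "\<sigma> \<in> configs"
  shows "{\<sigma>'\<in>configs. \<forall>u\<in>-{v}. \<sigma>' u = \<sigma> u} = {\<sigma>, flip v \<sigma>}"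
proof (intro equalityI subsetI)
  fix \<sigma>' assume \<sigma>': "\<sigma>' \<in> {\<sigma>'\<in>configs. \<forall>u\<in>-{v}. \<sigma>' u = \<sigma> u}"
  then have "\<sigma>' v = \<sigma> v \<or> \<sigma>' v = - \<sigma> v"
    using configs_abs_eq_1[of \<sigma>' v] configs_abs_eq_1[OF assms, of v] by (auto simp: abs_eq_iff)
  then show "\<sigma>' \<in> {\<sigma>, flip v \<sigma>}"
    using \<sigma>' by (auto simp: fun_eq_iff flip_def)
qed (use assms flip_in_configs in \<open>auto simp: flip_def split: if_splits\<close>)

lemma flip_neq_self:
  assumes "\<sigma> \<in> configs"
  shows "flip v \<sigma> \<noteq> \<sigma>"
proof
  assume "flip v \<sigma> = \<sigma>"
  then have "- \<sigma> v = \<sigma> v"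
    by (metis flip_def fun_upd_same)
  then show False
    using configs_abs_eq_1[OF assms, of v] by simp
qed

lemma marginally_bounded_flip:
  assumes "marginally_bounded b p" and "\<sigma> \<in> configs"
  shows "b \<le> p \<sigma> / (p \<sigma> + p (flip v \<sigma>))"
proof -
  have "\<sigma> v = 1 \<or> \<sigma> v = -1"
    using configs_abs_eq_1[OF assms(2), of v] by (auto simp: abs_eq_iff)
  then have "b \<le> (\<Sum>\<sigma>'\<in>{\<sigma>'\<in>configs. (\<forall>u\<in>-{v}. \<sigma>' u = \<sigma> u) \<and> \<sigma>' v = \<sigma> v}. p \<sigma>')
          / (\<Sum>\<sigma>'\<in>{\<sigma>'\<in>configs. \<forall>u\<in>-{v}. \<sigma>' u = \<sigma> u}. p \<sigma>')"
    using assms(1)[unfolded marginally_bounded_def, rule_format, of \<sigma> v "-{v}" "\<sigma> v"] assms(2)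
    by simp
  moreover have "{\<sigma>'\<in>configs. (\<forall>u\<in>-{v}. \<sigma>' u = \<sigma> u) \<and> \<sigma>' v = \<sigma> v} = {\<sigma>}"
    using assms(2) by (auto simp: fun_eq_iff)
  ultimately show ?thesis
    using flip_neq_self[OF assms(2), of v] by (simp add: configs_agree_off_vertex[OF assms(2)])
qed

lemma marginally_bounded_le_half:
  assumes "marginally_bounded b p" and "\<And>\<sigma>. 0 < p \<sigma>"
  shows "b \<le> 1/2"
proof -
  define \<sigma> :: "'a \<Rightarrow> real" where "\<sigma> = (\<lambda>_. 1)"
  define \<sigma>' where "\<sigma>' = flip undefined \<sigma>"
  have "\<sigma> \<in> configs" "\<sigma>' \<in> configs"
    by (simp_all add: \<sigma>_def \<sigma>'_def const_one_in_configs flip_in_configs)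
  then have "b \<le> p \<sigma> / (p \<sigma> + p \<sigma>')" and "b \<le> p \<sigma>' / (p \<sigma>' + p \<sigma>)"
    using marginally_bounded_flip[OF assms(1)] unfolding \<sigma>'_def by (metis flip_flip)+
  moreover have "p \<sigma> / (p \<sigma> + p \<sigma>') + p \<sigma>' / (p \<sigma>' + p \<sigma>) = 1"
    using assms(2)[of \<sigma>] assms(2)[of \<sigma>']
    by (simp add: add.commute[of "p \<sigma>'"] flip: add_divide_distrib)
  ultimately show ?thesis
    by linarith
qed

lemma marginally_bounded_flip_average:
  assumes mb: "marginally_bounded b p" and pos: "\<And>\<sigma>. 0 < p \<sigma>"
    and f: "\<And>\<sigma>. \<sigma> \<in> configs \<Longrightarrow> 0 \<le> f \<sigma>"
  shows "b * (\<Sum>\<sigma>\<in>configs. p \<sigma> * (f \<sigma> + f (flip u \<sigma>))) \<le> (\<Sum>\<sigma>\<in>configs. p \<sigma> * f \<sigma>)"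
proof -
  have "(\<Sum>\<sigma>\<in>configs. p \<sigma> * (f \<sigma> + f (flip u \<sigma>))) = (\<Sum>\<sigma>\<in>configs. (p \<sigma> + p (flip u \<sigma>)) * f \<sigma>)"
    using sum_configs_flip[of "\<lambda>\<sigma>. p \<sigma> * f (flip u \<sigma>)" u]
    by (simp add: distrib_left distrib_right sum.distrib)
  moreover have "b * ((p \<sigma> + p (flip u \<sigma>)) * f \<sigma>) \<le> p \<sigma> * f \<sigma>" if "\<sigma> \<in> configs" for \<sigma>
  proof -
    have "b * (p \<sigma> + p (flip u \<sigma>)) \<le> p \<sigma>"
      using marginally_bounded_flip[OF mb that, of u] pos[of \<sigma>] pos[of "flip u \<sigma>"]
      by (simp add: le_divide_eq)
    then show ?thesis
      using f[OF that] by (metis mult.assoc mult_right_mono)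
  qed
  ultimately show ?thesis
    by (simp add: sum_distrib_left sum_mono)
qed

section \<open>A lower bound on the total variation distance\<close>

lemma abs_normalized_diff_le:
  fixes m1 m2 n1 n2 :: real
  assumes "0 < m1" "0 < m2" "0 < n1" "0 < n2"
  shows "(m1 + m2) * \<bar>n1 / (n1 + n2) - m1 / (m1 + m2)\<bar> \<le> \<bar>n1 - m1\<bar> + \<bar>n2 - m2\<bar>"
proof -
  define q where "q = n1 / (n1 + n2)"
  have q: "0 \<le> q" "q \<le> 1"
    using assms by (simp_all add: q_def)
  have "q * (n1 + n2) = n1"
    using assms by (simp add: q_def)
  then have "(1 - q) * (n1 - m1) - q * (n2 - m2) = q * (m1 + m2) - m1"
    by (simp add: algebra_simps)
  also have "\<dots> = (m1 + m2) * (q - m1 / (m1 + m2))"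
    using assms by (simp add: right_diff_distrib mult.commute)
  finally have "(m1 + m2) * \<bar>q - m1 / (m1 + m2)\<bar> = \<bar>(1 - q) * (n1 - m1) - q * (n2 - m2)\<bar>"
    using assms by (simp add: abs_mult)
  also have "\<dots> \<le> \<bar>(1 - q) * (n1 - m1)\<bar> + \<bar>q * (n2 - m2)\<bar>"
    by (rule abs_triangle_ineq4)
  also have "\<dots> = (1 - q) * \<bar>n1 - m1\<bar> + q * \<bar>n2 - m2\<bar>"
    using q by (simp add: abs_mult)
  also have "\<dots> \<le> \<bar>n1 - m1\<bar> + \<bar>n2 - m2\<bar>"
    using q by (intro add_mono mult_left_le_one_le) auto
  finally show ?thesis
    by (simp add: q_def)
qed

lemma abs_le_abs_sinh: "\<bar>x :: real\<bar> \<le> \<bar>exp (x/2) - exp (-(x/2))\<bar>"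
  using real_le_abs_sinh[of "x/2"] by (simp add: exp_minus)

lemma log_odds_abs_le:
  fixes p q b x :: real
  assumes "0 \<le> b" "b \<le> p" "b \<le> 1 - p" "b \<le> q" "b \<le> 1 - q"
    and odds: "q * (1 - p) = exp x * (p * (1 - q))"
  shows "b * (1 - b) * \<bar>x\<bar> \<le> \<bar>q - p\<bar>"
proof -
  define a where "a = p * (1 - q)"
  have "q - p = q * (1 - p) - a"
    by (simp add: a_def algebra_simps)
  then have "(q - p)^2 = (exp x * a - a)^2"
    by (simp only: odds a_def)
  also have "\<dots> = a * (exp x * a) * (exp (x/2) - exp (-(x/2)))^2"
    by (simp add: power2_eq_square algebra_simps flip: exp_add)
  also have "a * (exp x * a) = (p * (1 - p)) * (q * (1 - q))"
    unfolding a_def odds[symmetric] by (simp add: algebra_simps)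
  finally have qp: "(q - p)^2 = (p * (1 - p)) * (q * (1 - q)) * (exp (x/2) - exp (-(x/2)))^2" .
  have var_ge: "b * (1 - b) \<le> t * (1 - t)" if "b \<le> t" "b \<le> 1 - t" for t
  proof -
    have "t * (1 - t) - b * (1 - b) = (t - b) * (1 - b - t)"
      by (simp add: algebra_simps)
    also have "\<dots> \<ge> 0"
      using that by simp
    finally show ?thesis
      by simp
  qed
  have b_var: "0 \<le> b * (1 - b)"
    using assms by simp
  have "b * (1 - b) \<le> p * (1 - p)" "b * (1 - b) \<le> q * (1 - q)"
    using var_ge assms by auto
  then have var_prod: "(b * (1 - b))^2 \<le> (p * (1 - p)) * (q * (1 - q))"
    unfolding power2_eq_square using b_var by (meson mult_mono order_trans)
  moreover have "x^2 \<le> (exp (x/2) - exp (-(x/2)))^2"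
    using abs_le_abs_sinh by (simp add: abs_le_square_iff)
  ultimately have "(b * (1 - b))^2 * x^2 \<le> (q - p)^2"
    unfolding qp using order_trans[OF zero_le_power2 var_prod] by (intro mult_mono) auto
  then have "(b * (1 - b) * \<bar>x\<bar>)^2 \<le> (q - p)^2"
    by (simp add: power_mult_distrib)
  then show ?thesis
    by (metis abs_le_square_iff abs_ge_self order_trans)
qed

lemma abs_diff_pair_ge_odds:
  fixes m1 m2 n1 n2 b x :: real
  assumes pos: "0 < m1" "0 < m2" "0 < n1" "0 < n2" and "0 \<le> b"
    and bounded: "b \<le> m1 / (m1 + m2)" "b \<le> m2 / (m1 + m2)" "b \<le> n1 / (n1 + n2)" "b \<le> n2 / (n1 + n2)"
    and odds: "n1 * m2 = exp x * n2 * m1"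
  shows "(m1 + m2) * (b * (1 - b) * \<bar>x\<bar>) \<le> \<bar>n1 - m1\<bar> + \<bar>n2 - m2\<bar>"
proof -
  define p q where "p = m1 / (m1 + m2)" and "q = n1 / (n1 + n2)"
  have compl: "1 - p = m2 / (m1 + m2)" "1 - q = n2 / (n1 + n2)"
    using pos by (simp_all add: p_def q_def field_simps)
  have "q * (1 - p) = exp x * (p * (1 - q))"
    unfolding compl using odds pos by (simp add: p_def q_def field_simps)
  then have "b * (1 - b) * \<bar>x\<bar> \<le> \<bar>q - p\<bar>"
    using bounded \<open>0 \<le> b\<close> unfolding compl[symmetric] p_def[symmetric] q_def[symmetric] by (intro log_odds_abs_le)
  then have "(m1 + m2) * (b * (1 - b) * \<bar>x\<bar>) \<le> (m1 + m2) * \<bar>q - p\<bar>"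
    using pos by simp
  also have "\<dots> \<le> \<bar>n1 - m1\<bar> + \<bar>n2 - m2\<bar>"
    unfolding p_def q_def by (rule abs_normalized_diff_le[OF pos])
  finally show ?thesis .
qed

lemma gibbs_abs_diff_flip_pair_ge:
  assumes ising: "ising_model E J1 h1" "ising_model E J2 h2"
    and mb: "marginally_bounded b (gibbs J1 h1)" "marginally_bounded b (gibbs J2 h2)"
    and "0 \<le> b" and \<sigma>: "\<sigma> \<in> configs"
  shows "(gibbs J2 h2 \<sigma> + gibbs J2 h2 (flip v \<sigma>)) * (b * (1 - b) * (2 * \<bar>local_field (J1 - J2) (h1 - h2) v \<sigma>\<bar>))
    \<le> \<bar>gibbs J1 h1 \<sigma> - gibbs J2 h2 \<sigma>\<bar> + \<bar>gibbs J1 h1 (flip v \<sigma>) - gibbs J2 h2 (flip v \<sigma>)\<bar>"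
proof -
  let ?x = "2 * \<sigma> v * local_field (J1 - J2) (h1 - h2) v \<sigma>"
  have bounds: "b \<le> p \<sigma> / (p \<sigma> + p (flip v \<sigma>))" "b \<le> p (flip v \<sigma>) / (p \<sigma> + p (flip v \<sigma>))"
    if "marginally_bounded b p" for p
    using marginally_bounded_flip[OF that \<sigma>, of v] marginally_bounded_flip[OF that flip_in_configs[OF \<sigma>, of v], of v]
    by (simp_all add: add.commute)
  have "\<bar>?x\<bar> = 2 * \<bar>local_field (J1 - J2) (h1 - h2) v \<sigma>\<bar>"
    using configs_abs_eq_1[OF \<sigma>, of v] by (simp add: abs_mult)
  then show ?thesis
    using abs_diff_pair_ge_odds[OF gibbs_pos gibbs_pos gibbs_pos gibbs_pos \<open>0 \<le> b\<close>
        bounds[OF mb(2)] bounds[OF mb(1)] gibbs_cross_ratio_flip[OF ising, of \<sigma> v]]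
    by simp
qed

lemma tv_ge_local_field:
  assumes ising: "ising_model E J1 h1" "ising_model E J2 h2"
    and mb: "marginally_bounded b (gibbs J1 h1)" "marginally_bounded b (gibbs J2 h2)"
    and b: "0 \<le> b"
  shows "2 * b * (1 - b) * (\<Sum>\<sigma>\<in>configs. gibbs J2 h2 \<sigma> * \<bar>local_field (J1 - J2) (h1 - h2) v \<sigma>\<bar>)
    \<le> (\<Sum>\<sigma>\<in>configs. \<bar>gibbs J1 h1 \<sigma> - gibbs J2 h2 \<sigma>\<bar>)"
proof -
  let ?\<nu> = "gibbs J1 h1" and ?\<mu> = "gibbs J2 h2"
  define F where "F \<sigma> = b * (1 - b) * (2 * \<bar>local_field (J1 - J2) (h1 - h2) v \<sigma>\<bar>)" for \<sigma>
  have "F (flip v \<sigma>) = F \<sigma>" for \<sigma>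
    using ising_model_diag[OF ising(1), of v] ising_model_diag[OF ising(2), of v]
    by (simp add: F_def local_field_flip)
  then have "(\<Sum>\<sigma>\<in>configs. ?\<mu> (flip v \<sigma>) * F \<sigma>) = (\<Sum>\<sigma>\<in>configs. ?\<mu> \<sigma> * F \<sigma>)"
    using sum_configs_flip[of "\<lambda>\<sigma>. ?\<mu> \<sigma> * F \<sigma>" v] by simp
  then have "(\<Sum>\<sigma>\<in>configs. (?\<mu> \<sigma> + ?\<mu> (flip v \<sigma>)) * F \<sigma>) = 2 * (\<Sum>\<sigma>\<in>configs. ?\<mu> \<sigma> * F \<sigma>)"
    by (simp add: distrib_right sum.distrib)
  moreover have "(\<Sum>\<sigma>\<in>configs. ?\<mu> \<sigma> * F \<sigma>)
      = 2 * b * (1 - b) * (\<Sum>\<sigma>\<in>configs. ?\<mu> \<sigma> * \<bar>local_field (J1 - J2) (h1 - h2) v \<sigma>\<bar>)"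
    unfolding F_def sum_distrib_left by (intro sum.cong) (auto simp: mult_ac)
  ultimately have "2 * (2 * b * (1 - b) * (\<Sum>\<sigma>\<in>configs. ?\<mu> \<sigma> * \<bar>local_field (J1 - J2) (h1 - h2) v \<sigma>\<bar>))
      = (\<Sum>\<sigma>\<in>configs. (?\<mu> \<sigma> + ?\<mu> (flip v \<sigma>)) * F \<sigma>)"
    by simp
  also have "\<dots> \<le> (\<Sum>\<sigma>\<in>configs. \<bar>?\<nu> \<sigma> - ?\<mu> \<sigma>\<bar> + \<bar>?\<nu> (flip v \<sigma>) - ?\<mu> (flip v \<sigma>)\<bar>)"
    unfolding F_def by (rule sum_mono) (rule gibbs_abs_diff_flip_pair_ge[OF ising mb b])
  also have "\<dots> = 2 * (\<Sum>\<sigma>\<in>configs. \<bar>?\<nu> \<sigma> - ?\<mu> \<sigma>\<bar>)"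
    by (simp add: sum.distrib sum_configs_flip[of "\<lambda>\<sigma>. \<bar>?\<nu> \<sigma> - ?\<mu> \<sigma>\<bar>"])
  finally show ?thesis
    by simp
qed

lemma local_field_mean_ge_coupling:
  assumes mb: "marginally_bounded b p" and pos: "\<And>\<sigma>. 0 < p \<sigma>" and sum_p: "(\<Sum>\<sigma>\<in>configs. p \<sigma>) = 1"
    and "0 \<le> b" and coupling: "\<theta> \<le> \<bar>J v u\<bar>"
  shows "2 * b * \<theta> \<le> (\<Sum>\<sigma>\<in>configs. p \<sigma> * \<bar>local_field J h v \<sigma>\<bar>)"
proof -
  have "2 * \<theta> \<le> \<bar>local_field J h v \<sigma>\<bar> + \<bar>local_field J h v (flip u \<sigma>)\<bar>" if "\<sigma> \<in> configs" for \<sigma>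
  proof -
    have "2 * \<bar>J v u\<bar> = \<bar>local_field J h v \<sigma> - local_field J h v (flip u \<sigma>)\<bar>"
      using configs_abs_eq_1[OF that, of u] by (simp add: local_field_flip abs_mult)
    then show ?thesis
      using coupling abs_triangle_ineq4[of "local_field J h v \<sigma>" "local_field J h v (flip u \<sigma>)"] by linarith
  qed
  then have "b * (\<Sum>\<sigma>\<in>configs. p \<sigma> * (2 * \<theta>))
      \<le> b * (\<Sum>\<sigma>\<in>configs. p \<sigma> * (\<bar>local_field J h v \<sigma>\<bar> + \<bar>local_field J h v (flip u \<sigma>)\<bar>))"
    using pos \<open>0 \<le> b\<close> by (intro mult_left_mono sum_mono) (auto simp: less_imp_le)
  also have "\<dots> \<le> (\<Sum>\<sigma>\<in>configs. p \<sigma> * \<bar>local_field J h v \<sigma>\<bar>)"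
    by (rule marginally_bounded_flip_average[OF mb pos]) simp
  finally show ?thesis
    by (simp add: sum_p flip: sum_distrib_right)
qed

lemma abs_local_field_ge:
  fixes J :: "'v::finite \<Rightarrow> 'v \<Rightarrow> real"
  assumes support: "\<And>w. J v w \<noteq> 0 \<Longrightarrow> E w v" and coupling: "\<And>w. \<bar>J v w\<bar> \<le> \<theta>"
    and field: "\<theta> * (real (deg E v) + 1) \<le> \<bar>h v\<bar>" and \<sigma>: "\<sigma> \<in> configs"
  shows "\<theta> \<le> \<bar>local_field J h v \<sigma>\<bar>"
proof -
  have "\<bar>\<Sum>w\<in>UNIV. J v w * \<sigma> w\<bar> \<le> (\<Sum>w\<in>UNIV. \<bar>J v w\<bar>)"
    using sum_abs[of "\<lambda>w. J v w * \<sigma> w" UNIV] configs_abs_eq_1[OF \<sigma>] by (simp add: abs_mult)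
  also have "\<dots> = (\<Sum>w\<in>{w. E w v}. \<bar>J v w\<bar>)"
    using support by (intro sum.mono_neutral_right) auto
  also have "\<dots> \<le> real (deg E v) * \<theta>"
    using coupling sum_bounded_above[of "{w. E w v}" "\<lambda>w. \<bar>J v w\<bar>" \<theta>] by (simp add: deg_def)
  finally show ?thesis
    using field unfolding local_field_def by (simp add: algebra_simps)
qed

lemma d_par_ge_field:
  fixes E :: "'v::finite \<Rightarrow> 'v \<Rightarrow> bool"
  assumes "\<theta> \<le> d_par E J1 h1 J2 h2" and "\<And>u w. \<bar>J1 u w - J2 u w\<bar> < \<theta>"
  obtains v where "\<theta> * (real (deg E v) + 1) \<le> \<bar>h1 v - h2 v\<bar>"
proof -
  have "{\<bar>J1 u w - J2 u w\<bar> | u w. True} = (\<lambda>(u, w). \<bar>J1 u w - J2 u w\<bar>) ` UNIV"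
    and "{\<bar>h1 v - h2 v\<bar> / (real (deg E v) + 1) | v. True} = (\<lambda>v. \<bar>h1 v - h2 v\<bar> / (real (deg E v) + 1)) ` UNIV"
    by auto
  then obtain v where "\<theta> \<le> \<bar>h1 v - h2 v\<bar> / (real (deg E v) + 1)"
    using assms(1) assms(2)[folded not_le] unfolding d_par_def by (auto simp: le_max_iff_disj Max_ge_iff)
  then show ?thesis
    by (intro that) (simp add: pos_le_divide_eq add.commute[of _ 1])
qed

lemma ising_model_diff_support:
  assumes "ising_model E J1 h1" and "ising_model E J2 h2" and "(J1 - J2) v w \<noteq> 0"
  shows "E w v"
proof -
  have "J1 v w \<noteq> 0 \<or> J2 v w \<noteq> 0"
    using assms(3) by auto
  then have "E v w"
    using assms(1,2) unfolding ising_model_def by blast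
  then show ?thesis
    using assms(1) unfolding ising_model_def simple_graph_def by blast
qed

lemma local_field_mean_ge_field:
  fixes E :: "'v::finite \<Rightarrow> 'v \<Rightarrow> bool"
  assumes ising: "ising_model E J1 h1" "ising_model E J2 h2"
    and coupling: "\<And>u w. \<bar>J1 u w - J2 u w\<bar> < \<theta>" and field: "\<theta> * (real (deg E v) + 1) \<le> \<bar>h1 v - h2 v\<bar>"
  shows "\<theta> \<le> (\<Sum>\<sigma>\<in>configs. gibbs J2 h2 \<sigma> * \<bar>local_field (J1 - J2) (h1 - h2) v \<sigma>\<bar>)"
proof -
  have "gibbs J2 h2 \<sigma> * \<theta> \<le> gibbs J2 h2 \<sigma> * \<bar>local_field (J1 - J2) (h1 - h2) v \<sigma>\<bar>"
    if "\<sigma> \<in> configs" for \<sigma>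
  proof -
    have "\<theta> \<le> \<bar>local_field (J1 - J2) (h1 - h2) v \<sigma>\<bar>"
      using ising_model_diff_support[OF ising] coupling[THEN less_imp_le] field
      by (intro abs_local_field_ge[OF _ _ _ that]) auto
    then show ?thesis
      using gibbs_pos[of J2 h2 \<sigma>] by (simp add: mult_left_mono)
  qed
  then have "(\<Sum>\<sigma>\<in>configs. gibbs J2 h2 \<sigma> * \<theta>) \<le> (\<Sum>\<sigma>\<in>configs. gibbs J2 h2 \<sigma> * \<bar>local_field (J1 - J2) (h1 - h2) v \<sigma>\<bar>)"
    by (rule sum_mono)
  then show ?thesis
    by (simp add: sum_gibbs flip: sum_distrib_right)
qed

lemma tv_ge_d_par:
  fixes E :: "'v::finite \<Rightarrow> 'v \<Rightarrow> bool"
  assumes ising: "ising_model E J1 h1" "ising_model E J2 h2"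
    and mb: "marginally_bounded b (gibbs J1 h1)" "marginally_bounded b (gibbs J2 h2)"
    and "0 < b" and "0 < \<theta>" and "\<theta> \<le> d_par E J1 h1 J2 h2"
  shows "b^2 * \<theta> \<le> (\<Sum>\<sigma>\<in>(configs :: ('v \<Rightarrow> real) set). \<bar>gibbs J1 h1 \<sigma> - gibbs J2 h2 \<sigma>\<bar>)"
proof -
  let ?M = "\<lambda>v. \<Sum>\<sigma>\<in>(configs :: ('v \<Rightarrow> real) set). gibbs J2 h2 \<sigma> * \<bar>local_field (J1 - J2) (h1 - h2) v \<sigma>\<bar>"
  have b_half: "b \<le> 1/2"
    using marginally_bounded_le_half[OF mb(2) gibbs_pos] .
  obtain v where M: "b * \<theta> \<le> ?M v"
  proof (cases "\<exists>u w. \<theta> \<le> \<bar>J1 u w - J2 u w\<bar>")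
    case True
    then obtain v u where "\<theta> \<le> \<bar>(J1 - J2) v u\<bar>"
      by auto
    then have "2 * b * \<theta> \<le> ?M v"
      using \<open>0 < b\<close> by (intro local_field_mean_ge_coupling[OF mb(2) gibbs_pos sum_gibbs]) auto
    then show ?thesis
      using that[of v] mult_pos_pos[OF \<open>0 < b\<close> \<open>0 < \<theta>\<close>] by linarith
  next
    case False
    then have coupling: "\<bar>J1 u w - J2 u w\<bar> < \<theta>" for u w
      by (simp add: not_le)
    then obtain v where "\<theta> * (real (deg E v) + 1) \<le> \<bar>h1 v - h2 v\<bar>"
      by (rule d_par_ge_field[OF \<open>\<theta> \<le> _\<close>])
    then have "\<theta> \<le> ?M v"
      by (rule local_field_mean_ge_field[OF ising coupling])
    then show ?thesis
      using that[of v] mult_left_le_one_le[of \<theta> b] \<open>0 < \<theta>\<close> \<open>0 < b\<close> b_half by linarith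
  qed
  have "0 \<le> (1 - 2 * b) * (b^2 * \<theta>)"
    using \<open>0 < \<theta>\<close> b_half by simp
  also have "\<dots> = 2 * b * (1 - b) * (b * \<theta>) - b^2 * \<theta>"
    by (simp add: power2_eq_square algebra_simps)
  finally have "b^2 * \<theta> \<le> 2 * b * (1 - b) * (b * \<theta>)"
    by simp
  also have "\<dots> \<le> 2 * b * (1 - b) * ?M v"
    using M \<open>0 < b\<close> b_half by (intro mult_left_mono) auto
  also have "\<dots> \<le> (\<Sum>\<sigma>\<in>configs. \<bar>gibbs J1 h1 \<sigma> - gibbs J2 h2 \<sigma>\<bar>)"
    using tv_ge_local_field[OF ising mb] \<open>0 < b\<close> by simp
  finally show ?thesis .
qed

section \<open>From total variation to the chi-alpha divergence\<close>

lemma convex_on_powr_nonneg: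
  assumes "1 \<le> p"
  shows "convex_on {0..} (\<lambda>x::real. x powr p)"
proof
  have scaled: "(s * z) powr p \<le> s * z powr p" if "0 \<le> s" "s \<le> 1" "0 \<le> z" for s z :: real
  proof -
    have "s powr p \<le> s powr 1"
      using that assms by (intro powr_mono') auto
    then show ?thesis
      using that by (simp add: powr_mult mult_right_mono)
  qed
  fix t x y :: real
  assume t: "0 < t" "t < 1" and xy: "x \<in> {0..}" "y \<in> {0..}"
  show "((1 - t) *\<^sub>R x + t *\<^sub>R y) powr p \<le> (1 - t) * x powr p + t * y powr p"
  proof (cases "x = 0 \<or> y = 0")
    case True
    then show ?thesis
      using scaled[of t y] scaled[of "1 - t" x] t xy by auto
  next
    case False
    then show ?thesis
      using convex_onD[OF powr_convex[OF assms], of t x y] t xy by simp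
  qed
qed simp

lemma powr_mean_le_mean_powr:
  fixes w t :: "'a \<Rightarrow> real"
  assumes "1 \<le> p" and "finite S" and "\<And>i. i \<in> S \<Longrightarrow> 0 \<le> w i" and "(\<Sum>i\<in>S. w i) = 1"
    and "\<And>i. i \<in> S \<Longrightarrow> 0 \<le> t i"
  shows "(\<Sum>i\<in>S. w i * t i) powr p \<le> (\<Sum>i\<in>S. w i * t i powr p)"
  using convex_on_sum[OF \<open>finite S\<close> _ convex_on_powr_nonneg[OF \<open>1 \<le> p\<close>], of w t] assms
  by fastforce

lemma tv_powr_le_chi_div:
  fixes \<nu> \<mu> :: "('v::finite \<Rightarrow> real) \<Rightarrow> real"
  assumes "1 \<le> \<alpha>" and pos: "\<And>\<sigma>. 0 < \<mu> \<sigma>" and "(\<Sum>\<sigma>\<in>configs. \<mu> \<sigma>) = 1"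
  shows "(\<Sum>\<sigma>\<in>configs. \<bar>\<nu> \<sigma> - \<mu> \<sigma>\<bar>) powr \<alpha> \<le> 2 * chi_div \<alpha> \<nu> \<mu>"
proof -
  have "\<bar>\<nu> \<sigma> - \<mu> \<sigma>\<bar> = \<mu> \<sigma> * \<bar>\<nu> \<sigma> / \<mu> \<sigma> - 1\<bar>" for \<sigma>
  proof -
    have "\<nu> \<sigma> - \<mu> \<sigma> = \<mu> \<sigma> * (\<nu> \<sigma> / \<mu> \<sigma> - 1)"
      using pos[of \<sigma>] by (simp add: field_simps)
    then show ?thesis
      using pos[of \<sigma>] by (simp add: abs_mult)
  qed
  then have "(\<Sum>\<sigma>\<in>configs. \<bar>\<nu> \<sigma> - \<mu> \<sigma>\<bar>) powr \<alpha> = (\<Sum>\<sigma>\<in>configs. \<mu> \<sigma> * \<bar>\<nu> \<sigma> / \<mu> \<sigma> - 1\<bar>) powr \<alpha>"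
    by simp
  also have "\<dots> \<le> (\<Sum>\<sigma>\<in>configs. \<mu> \<sigma> * \<bar>\<nu> \<sigma> / \<mu> \<sigma> - 1\<bar> powr \<alpha>)"
    by (rule powr_mean_le_mean_powr[OF \<open>1 \<le> \<alpha>\<close> finite_configs]) (use assms in \<open>auto simp: less_imp_le\<close>)
  also have "\<dots> = 2 * chi_div \<alpha> \<nu> \<mu>"
    by (simp add: chi_div_def sum_distrib_left)
  finally show ?thesis .
qed

lemma ratio_plus_one_powr_le:
  fixes r s \<alpha> :: real
  assumes "0 \<le> r" and "0 < s" and "1 \<le> \<alpha>"
  shows "(r + 1) powr \<alpha> \<le> ((s + 2) / s) powr \<alpha> * \<bar>r - 1\<bar> powr \<alpha> + (s + 2) powr \<alpha>"
proof (cases "s \<le> \<bar>r - 1\<bar>")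
  case True
  then have "2 \<le> 2 * \<bar>r - 1\<bar> / s"
    using \<open>0 < s\<close> by (simp add: pos_le_divide_eq)
  then have "r + 1 \<le> \<bar>r - 1\<bar> + 2 * \<bar>r - 1\<bar> / s"
    by linarith
  also have "\<dots> = (s + 2) / s * \<bar>r - 1\<bar>"
    using \<open>0 < s\<close> by (simp add: field_simps)
  finally have "r + 1 \<le> (s + 2) / s * \<bar>r - 1\<bar>" .
  then have "(r + 1) powr \<alpha> \<le> ((s + 2) / s * \<bar>r - 1\<bar>) powr \<alpha>"
    using assms by (intro powr_mono2) auto
  also have "\<dots> = ((s + 2) / s) powr \<alpha> * \<bar>r - 1\<bar> powr \<alpha>"
    by (rule powr_mult)
  finally show ?thesis
    by (simp add: add_increasing2)
next
  case False
  then have "(r + 1) powr \<alpha> \<le> (s + 2) powr \<alpha>"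
    using assms by (intro powr_mono2) auto
  then show ?thesis
    by (simp add: add_increasing)
qed

lemma sum_ratio_plus_one_powr_le:
  fixes \<nu> \<mu> :: "('v::finite \<Rightarrow> real) \<Rightarrow> real"
  assumes "1 \<le> \<alpha>" and "0 < s" and pos: "\<And>\<sigma>. 0 < \<mu> \<sigma>" and sum_\<mu>: "(\<Sum>\<sigma>\<in>configs. \<mu> \<sigma>) = 1"
    and "\<And>\<sigma>. 0 \<le> \<nu> \<sigma>"
  shows "(\<Sum>\<sigma>\<in>configs. \<mu> \<sigma> * (\<nu> \<sigma> / \<mu> \<sigma> + 1) powr \<alpha>)
    \<le> ((s + 2) / s) powr \<alpha> * (2 * chi_div \<alpha> \<nu> \<mu>) + (s + 2) powr \<alpha>"
proof -
  have "(\<Sum>\<sigma>\<in>configs. \<mu> \<sigma> * (\<nu> \<sigma> / \<mu> \<sigma> + 1) powr \<alpha>)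
      \<le> (\<Sum>\<sigma>\<in>configs. \<mu> \<sigma> * (((s + 2) / s) powr \<alpha> * \<bar>\<nu> \<sigma> / \<mu> \<sigma> - 1\<bar> powr \<alpha> + (s + 2) powr \<alpha>))"
    using assms by (intro sum_mono mult_left_mono ratio_plus_one_powr_le) (auto simp: less_imp_le)
  also have "\<dots> = ((s + 2) / s) powr \<alpha> * (\<Sum>\<sigma>\<in>configs. \<mu> \<sigma> * \<bar>\<nu> \<sigma> / \<mu> \<sigma> - 1\<bar> powr \<alpha>)
      + (s + 2) powr \<alpha> * (\<Sum>\<sigma>\<in>configs. \<mu> \<sigma>)"
    by (simp add: algebra_simps sum.distrib sum_distrib_left sum_distrib_right)
  also have "\<dots> = ((s + 2) / s) powr \<alpha> * (2 * chi_div \<alpha> \<nu> \<mu>) + (s + 2) powr \<alpha>"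
    by (simp add: chi_div_def sum_distrib_left sum_\<mu>)
  finally show ?thesis .
qed

lemma scaled_split_bound_le:
  fixes \<alpha> L \<chi> S s :: real
  assumes "1 \<le> \<alpha>" and "0 < L" and "L \<le> \<chi>" and s: "s = L powr (1 / (\<alpha> + 1))"
    and S: "S \<le> ((s + 2) / s) powr \<alpha> * (2 * \<chi>) + (s + 2) powr \<alpha>"
  shows "L * (s + 2) powr (-\<alpha>) * (2 * s + 1) powr (-1) * S \<le> \<chi>"
proof -
  define P Q where "P = (s + 2) powr \<alpha>" and "Q = s powr \<alpha>"
  have "0 < s"
    using \<open>0 < L\<close> by (simp add: s)
  then have "0 < P" "0 < Q"
    by (simp_all add: P_def Q_def)
  have "Q * s = s powr (\<alpha> + 1)"
    using \<open>0 < s\<close> by (simp add: Q_def powr_add)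
  also have "\<dots> = L"
    using \<open>0 < L\<close> \<open>1 \<le> \<alpha>\<close> unfolding s by (simp add: powr_powr)
  finally have L_over_Q: "L / Q = s"
    using \<open>0 < Q\<close> by (simp add: field_simps)
  have "L * (s + 2) powr (-\<alpha>) * (2 * s + 1) powr (-1) * S = L / (P * (2 * s + 1)) * S"
    using \<open>0 < s\<close> by (simp add: P_def powr_minus divide_inverse powr_neg_one)
  also have "\<dots> \<le> L / (P * (2 * s + 1)) * (P / Q * (2 * \<chi>) + P)"
    using S \<open>0 < s\<close> \<open>0 < P\<close> \<open>0 < L\<close> by (intro mult_left_mono) (simp_all add: P_def Q_def powr_divide)
  also have "\<dots> = (2 * \<chi> * (L / Q) + L) / (2 * s + 1)"
  proof -
    have "2 * s + 1 \<noteq> 0" "P \<noteq> 0" "Q \<noteq> 0"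
      using \<open>0 < s\<close> \<open>0 < P\<close> \<open>0 < Q\<close> by simp_all
    then show ?thesis
      by (simp add: divide_simps) algebra
  qed
  also have "\<dots> \<le> \<chi>"
    using \<open>0 < s\<close> \<open>L \<le> \<chi>\<close> by (simp add: L_over_Q pos_divide_le_eq algebra_simps)
  finally show ?thesis .
qed

theorem lemma2p3:
  fixes E :: "'v::finite \<Rightarrow> 'v \<Rightarrow> bool"
    and J\<nu> J\<mu> :: "'v \<Rightarrow> 'v \<Rightarrow> real" and h\<nu> h\<mu> :: "'v \<Rightarrow> real"
    and \<alpha> \<theta> b :: real
  assumes "\<alpha> \<ge> 1" and "0 < \<theta>" and "\<theta> \<le> 1" and "0 < b" and "b \<le> 1"
    and "ising_model E J\<nu> h\<nu>" and "ising_model E J\<mu> h\<mu>"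
    and "d_par E J\<nu> h\<nu> J\<mu> h\<mu> \<ge> \<theta>"
    and "marginally_bounded b (gibbs J\<nu> h\<nu>)" and "marginally_bounded b (gibbs J\<mu> h\<mu>)"
  shows "chi_div \<alpha> (gibbs J\<nu> h\<nu>) (gibbs J\<mu> h\<mu>) \<ge>
    B_const \<alpha> b \<theta> * (\<Sum>\<sigma>\<in>configs. gibbs J\<mu> h\<mu> \<sigma> *
        (gibbs J\<nu> h\<nu> \<sigma> / gibbs J\<mu> h\<mu> \<sigma> + 1) powr \<alpha>)"
proof -
  define L where "L = b powr (2*\<alpha>) * \<theta> powr \<alpha> / 2"
  define s where "s = L powr (1 / (\<alpha> + 1))"
  have "0 < L" "0 < s"
    using assms by (simp_all add: L_def s_def)
  have "b^2 * \<theta> \<le> (\<Sum>\<sigma>\<in>(configs :: ('v \<Rightarrow> real) set). \<bar>gibbs J\<nu> h\<nu> \<sigma> - gibbs J\<mu> h\<mu> \<sigma>\<bar>)"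
    by (rule tv_ge_d_par[OF assms(6,7,9,10,4,2,8)])
  then have "(b^2 * \<theta>) powr \<alpha> \<le> (\<Sum>\<sigma>\<in>configs. \<bar>gibbs J\<nu> h\<nu> \<sigma> - gibbs J\<mu> h\<mu> \<sigma>\<bar>) powr \<alpha>"
    using assms by (intro powr_mono2) auto
  also have "\<dots> \<le> 2 * chi_div \<alpha> (gibbs J\<nu> h\<nu>) (gibbs J\<mu> h\<mu>)"
    using assms(1) by (rule tv_powr_le_chi_div[OF _ gibbs_pos sum_gibbs])
  also have "b^2 = b powr 2"
    using \<open>0 < b\<close> by (simp add: powr_realpow)
  then have "(b^2 * \<theta>) powr \<alpha> = 2 * L"
    by (simp add: L_def powr_mult powr_powr mult.commute)
  finally have "L \<le> chi_div \<alpha> (gibbs J\<nu> h\<nu>) (gibbs J\<mu> h\<mu>)"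
    by simp
  moreover have "(\<Sum>\<sigma>\<in>configs. gibbs J\<mu> h\<mu> \<sigma> * (gibbs J\<nu> h\<nu> \<sigma> / gibbs J\<mu> h\<mu> \<sigma> + 1) powr \<alpha>)
      \<le> ((s + 2) / s) powr \<alpha> * (2 * chi_div \<alpha> (gibbs J\<nu> h\<nu>) (gibbs J\<mu> h\<mu>)) + (s + 2) powr \<alpha>"
    using assms(1) \<open>0 < s\<close> by (rule sum_ratio_plus_one_powr_le[OF _ _ gibbs_pos sum_gibbs less_imp_le[OF gibbs_pos]])
  moreover have "B_const \<alpha> b \<theta> = L * (s + 2) powr (-\<alpha>) * (2 * s + 1) powr (-1)"
    by (simp add: B_const_def Let_def L_def s_def)
  ultimately show ?thesis
    using scaled_split_bound_le[OF assms(1) \<open>0 < L\<close> _ s_def] by simp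
qed

end
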